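(* Let $\mathbf{P}_A,\mathbf{P}_B,\mathbf{Q}_A,\mathbf{Q}_B\in\mathbb{R}^{n\times n}$ be symmetric positive definite and for $\omega\in[0,1]$, $\bar\omega=1-\omega$, let $\mathbf{B}_{\mathrm{SCI}}(\omega)=\left(\omega(\mathbf{P}_A+\omega\mathbf{Q}_A)^{-1}+\bar\omega(\mathbf{P}_B+\bar\omega\mathbf{Q}_B)^{-1}\right)^{-1}$. Then the function $\omega\mapsto\operatorname{tr}(\mathbf{B}_{\mathrm{SCI}}(\omega))$ is convex on $[0,1]$. *)

theory Defs
  imports "HOL-Analysis.Analysis"
begin

definition spd :: "real^'n^'n \<Rightarrow> bool" where
  "spd A \<longleftrightarrow> transpose A = A \<and> (\<forall>x. x \<noteq> 0 \<longrightarrow> x \<bullet> (A *v x) > 0)"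

definition B_SCI :: "real^'n^'n \<Rightarrow> real^'n^'n \<Rightarrow> real^'n^'n \<Rightarrow> real^'n^'n \<Rightarrow> real \<Rightarrow> real^'n^'n" where
  "B_SCI PA PB QA QB \<omega> =
     matrix_inv (\<omega> *\<^sub>R matrix_inv (PA + \<omega> *\<^sub>R QA)
               + (1 - \<omega>) *\<^sub>R matrix_inv (PB + (1 - \<omega>) *\<^sub>R QB))"

end

theory Submission
  imports Defs
begin

(*
  For fixed x, completing the square shows that x' B(\<omega>) x is the minimum of
  \<omega> a' (P_A + \<omega> Q_A) a + (1 - \<omega>) b' (P_B + (1 - \<omega>) Q_B) b over all a, b with
  \<omega> a + (1 - \<omega>) b = x. Reading \<omega>^2 a' Q_A a as the quadratic form of \<omega> a, each term of this
  cost is a perspective \<omega> f(a) of a convex quadratic f or a convex quadratic of \<omega> a, hence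
  jointly convex in (\<omega>, \<omega> a), while the constraint is linear in (\<omega> a, (1 - \<omega>) b). Partial
  minimisation of a jointly convex function yields a convex function of \<omega>, and the trace is
  the sum of these values over the standard basis vectors x.
*)

definition quad_form :: "real^'n^'n \<Rightarrow> real^'n \<Rightarrow> real" where
  "quad_form M x = x \<bullet> (M *v x)"

definition psd :: "real^'n^'n \<Rightarrow> bool" where
  "psd M \<longleftrightarrow> transpose M = M \<and> (\<forall>x. 0 \<le> quad_form M x)"

lemma spd_iff_quad_form:
  "spd M \<longleftrightarrow> transpose M = M \<and> (\<forall>x. x \<noteq> 0 \<longrightarrow> 0 < quad_form M x)"
  by (simp add: spd_def quad_form_def)

lemma symmetric_matrix_inner_commute:
  fixes M :: "real^'n^'n"
  assumes "transpose M = M"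
  shows "x \<bullet> (M *v y) = y \<bullet> (M *v x)"
  by (metis assms dot_lmul_matrix inner_commute vector_transpose_matrix)

lemma quad_form_scaleR: "quad_form M (c *\<^sub>R x) = c\<^sup>2 * quad_form M x"
  by (simp add: quad_form_def matrix_vector_mult_scaleR power2_eq_square)

lemma quad_form_matrix_add: "quad_form (A + B) x = quad_form A x + quad_form B x"
  by (simp add: quad_form_def matrix_vector_mult_add_rdistrib inner_add_right)

lemma quad_form_matrix_scaleR:
  fixes M :: "real^'n^'n"
  shows "quad_form (c *\<^sub>R M) x = c * quad_form M x"
  by (simp add: quad_form_def flip: scaleR_matrix_vector_assoc)

lemma quad_form_add:
  fixes M :: "real^'n^'n"
  assumes "transpose M = M"
  shows "quad_form M (x + y) = quad_form M x + 2 * (y \<bullet> (M *v x)) + quad_form M y"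
  using symmetric_matrix_inner_commute[OF assms, of x y]
  by (simp add: quad_form_def matrix_vector_right_distrib inner_add_left inner_add_right)

lemma psd_quad_form_convex:
  fixes M :: "real^'n^'n"
  assumes "psd M"
  shows "convex_on UNIV (quad_form M)"
proof (rule convex_onI)
  fix t :: real and x y :: "real^'n"
  assume t: "0 < t" "t < 1"
  have sym: "transpose M = M" and nonneg: "0 \<le> quad_form M (y - x)"
    using assms by (auto simp: psd_def)
  have "(1 - t) *\<^sub>R x + t *\<^sub>R y = x + t *\<^sub>R (y - x)"
    by (simp add: algebra_simps)
  then have mid: "quad_form M ((1 - t) *\<^sub>R x + t *\<^sub>R y)
      = quad_form M x + 2 * t * ((y - x) \<bullet> (M *v x)) + t\<^sup>2 * quad_form M (y - x)"
    by (simp add: quad_form_add[OF sym] quad_form_scaleR)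
  have right: "quad_form M y = quad_form M x + 2 * ((y - x) \<bullet> (M *v x)) + quad_form M (y - x)"
    using quad_form_add[OF sym, of x "y - x"] by simp
  have "0 \<le> (t - t\<^sup>2) * quad_form M (y - x)"
    using t nonneg by (simp add: power2_eq_square)
  then show "quad_form M ((1 - t) *\<^sub>R x + t *\<^sub>R y) \<le> (1 - t) * quad_form M x + t * quad_form M y"
    unfolding mid right by (simp add: algebra_simps)
qed simp

lemma spd_imp_psd: "spd M \<Longrightarrow> psd M"
  unfolding spd_iff_quad_form psd_def
  by (metis order.strict_implies_order order_refl quad_form_def inner_zero_left)

lemma transpose_add: "transpose (A + B) = transpose A + transpose B"
  by (simp add: transpose_def vec_eq_iff)

lemma psd_scaleR: "0 \<le> c \<Longrightarrow> psd M \<Longrightarrow> psd (c *\<^sub>R M)"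
  by (simp add: psd_def quad_form_matrix_scaleR transpose_scalar)

lemma spd_add_psd: "spd A \<Longrightarrow> psd B \<Longrightarrow> spd (A + B)"
  unfolding spd_iff_quad_form psd_def
  by (simp add: quad_form_matrix_add transpose_add add_pos_nonneg)

lemma spd_scaleR: "0 < c \<Longrightarrow> spd M \<Longrightarrow> spd (c *\<^sub>R M)"
  by (simp add: spd_iff_quad_form quad_form_matrix_scaleR transpose_scalar)

lemma spd_convex_combination:
  assumes "spd A" "spd B" "0 \<le> w" "w \<le> 1"
  shows "spd (w *\<^sub>R A + (1 - w) *\<^sub>R B)"
proof (cases "w = 0")
  case False
  then show ?thesis
    using assms by (simp add: spd_add_psd spd_scaleR psd_scaleR spd_imp_psd)
qed (use assms in simp)

lemma spd_invertible:
  fixes M :: "real^'n^'n"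
  assumes "spd M"
  shows "invertible M"
proof -
  have "y = 0" if "M *v y = 0" for y
    using assms that by (auto simp: spd_def)
  then show ?thesis
    using matrix_left_invertible_ker invertible_left_inverse by blast
qed

lemma matrix_inv_inverse:
  fixes M :: "'a::field^'n^'n"
  assumes "invertible M"
  shows matrix_inv_right: "M ** matrix_inv M = mat 1"
    and matrix_inv_left: "matrix_inv M ** M = mat 1"
  using someI_ex[OF assms[unfolded invertible_def]] by (simp_all add: matrix_inv_def)

lemma spd_matrix_inv:
  fixes M :: "real^'n^'n"
  assumes "spd M"
  shows "spd (matrix_inv M)"
  unfolding spd_iff_quad_form
proof (intro conjI allI impI)
  have sym: "transpose M = M" and inv: "invertible M"
    using assms spd_invertible by (auto simp: spd_def)
  have "M ** transpose (matrix_inv M) = mat 1"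
    by (metis matrix_transpose_mul matrix_inv_left[OF inv] sym transpose_mat)
  then show "transpose (matrix_inv M) = matrix_inv M"
    by (metis matrix_inv_left[OF inv] matrix_mul_assoc matrix_mul_lid matrix_mul_rid)
  fix y :: "real^'n"
  assume "y \<noteq> 0"
  define z where "z = matrix_inv M *v y"
  have "M *v z = y"
    by (simp add: z_def matrix_vector_mul_assoc matrix_inv_right[OF inv])
  then have "z \<noteq> 0" and "quad_form (matrix_inv M) y = quad_form M z"
    using \<open>y \<noteq> 0\<close> by (auto simp: quad_form_def z_def inner_commute)
  then show "0 < quad_form (matrix_inv M) y"
    using assms by (simp add: spd_iff_quad_form)
qed

lemma quad_form_inv_sum_minimum:
  fixes A B :: "real^'n^'n" and s t :: real
  defines "S \<equiv> s *\<^sub>R matrix_inv A + t *\<^sub>R matrix_inv B"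
  assumes psd: "psd A" "psd B" and inv: "invertible A" "invertible B" "invertible S"
    and weights: "0 \<le> s" "0 \<le> t"
  shows "\<exists>a b. s *\<^sub>R a + t *\<^sub>R b = x \<and> s * quad_form A a + t * quad_form B b = quad_form (matrix_inv S) x"
    and "s *\<^sub>R a + t *\<^sub>R b = x \<Longrightarrow> quad_form (matrix_inv S) x \<le> s * quad_form A a + t * quad_form B b"
proof -
  define u where "u = matrix_inv S *v x"
  define a0 where "a0 = matrix_inv A *v u"
  define b0 where "b0 = matrix_inv B *v u"
  have Aa0: "A *v a0 = u" and Bb0: "B *v b0 = u"
    by (simp_all add: a0_def b0_def matrix_vector_mul_assoc matrix_inv_right inv)
  have "s *\<^sub>R a0 + t *\<^sub>R b0 = S *v u"
    by (simp add: S_def a0_def b0_def matrix_vector_mult_add_rdistrib flip: scaleR_matrix_vector_assoc)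
  also have "\<dots> = x"
    by (simp add: u_def matrix_vector_mul_assoc matrix_inv_right inv)
  finally have feasible: "s *\<^sub>R a0 + t *\<^sub>R b0 = x" .
  have "s * quad_form A a0 + t * quad_form B b0 = (s *\<^sub>R a0 + t *\<^sub>R b0) \<bullet> u"
    by (simp add: quad_form_def Aa0 Bb0 inner_add_left)
  then have attained: "s * quad_form A a0 + t * quad_form B b0 = quad_form (matrix_inv S) x"
    by (simp add: feasible quad_form_def u_def)
  show "\<exists>a b. s *\<^sub>R a + t *\<^sub>R b = x \<and> s * quad_form A a + t * quad_form B b = quad_form (matrix_inv S) x"
    using feasible attained by blast
  assume "s *\<^sub>R a + t *\<^sub>R b = x"
  then have "s *\<^sub>R (a - a0) + t *\<^sub>R (b - b0) = 0"
    by (simp add: algebra_simps feasible)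
  then have orth: "s * ((a - a0) \<bullet> u) + t * ((b - b0) \<bullet> u) = 0"
    by (metis inner_add_left inner_scaleR_left inner_zero_left)
  have sym: "transpose A = A" "transpose B = B"
    using psd by (simp_all add: psd_def)
  have qa: "quad_form A a = quad_form A a0 + 2 * ((a - a0) \<bullet> u) + quad_form A (a - a0)"
    and qb: "quad_form B b = quad_form B b0 + 2 * ((b - b0) \<bullet> u) + quad_form B (b - b0)"
    using quad_form_add[OF sym(1), of a0 "a - a0"] quad_form_add[OF sym(2), of b0 "b - b0"]
    by (simp_all add: Aa0 Bb0)
  have "s * quad_form A a + t * quad_form B b
      = s * quad_form A a0 + t * quad_form B b0 + 2 * (s * ((a - a0) \<bullet> u) + t * ((b - b0) \<bullet> u))
        + s * quad_form A (a - a0) + t * quad_form B (b - b0)"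
    unfolding qa qb by (simp add: algebra_simps)
  moreover have "0 \<le> s * quad_form A (a - a0)" "0 \<le> t * quad_form B (b - b0)"
    using psd weights by (simp_all add: psd_def)
  ultimately show "quad_form (matrix_inv S) x \<le> s * quad_form A a + t * quad_form B b"
    using attained orth by (smt (verit))
qed

lemma convex_on_partial_minimum:
  fixes g :: "'a::real_vector \<Rightarrow> real" and cost :: "'a \<Rightarrow> 'b \<Rightarrow> real"
  assumes "convex S"
    and attained: "\<And>w. w \<in> S \<Longrightarrow> \<exists>y \<in> F w. cost w y \<le> g w"
    and lower: "\<And>w y. w \<in> S \<Longrightarrow> y \<in> F w \<Longrightarrow> g w \<le> cost w y"
    and jointly_convex: "\<And>w1 w2 y1 y2 u v. w1 \<in> S \<Longrightarrow> w2 \<in> S \<Longrightarrow> y1 \<in> F w1 \<Longrightarrow> y2 \<in> F w2 \<Longrightarrow>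
      0 \<le> u \<Longrightarrow> 0 \<le> v \<Longrightarrow> u + v = 1 \<Longrightarrow>
      \<exists>y \<in> F (u *\<^sub>R w1 + v *\<^sub>R w2). cost (u *\<^sub>R w1 + v *\<^sub>R w2) y \<le> u * cost w1 y1 + v * cost w2 y2"
  shows "convex_on S g"
  unfolding convex_on_def
proof (intro conjI ballI allI impI)
  fix w1 w2 and u v :: real
  assume w: "w1 \<in> S" "w2 \<in> S" and uv: "0 \<le> u" "0 \<le> v" "u + v = 1"
  obtain y1 y2 where y: "y1 \<in> F w1" "y2 \<in> F w2" and "cost w1 y1 \<le> g w1" "cost w2 y2 \<le> g w2"
    using attained w by meson
  then have "u * cost w1 y1 + v * cost w2 y2 \<le> u * g w1 + v * g w2"
    using uv by (simp add: add_mono mult_left_mono)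
  moreover obtain y where "y \<in> F (u *\<^sub>R w1 + v *\<^sub>R w2)"
    and "cost (u *\<^sub>R w1 + v *\<^sub>R w2) y \<le> u * cost w1 y1 + v * cost w2 y2"
    using jointly_convex[OF w y uv] by blast
  moreover have "u *\<^sub>R w1 + v *\<^sub>R w2 \<in> S"
    using \<open>convex S\<close> w uv by (simp add: convexD)
  ultimately show "g (u *\<^sub>R w1 + v *\<^sub>R w2) \<le> u * g w1 + v * g w2"
    using lower by fastforce
qed (rule \<open>convex S\<close>)

lemma convex_on_perspective_le:
  fixes f :: "'a::real_vector \<Rightarrow> real"
  assumes "convex_on UNIV f" "0 \<le> s1" "0 \<le> s2"
    and a: "(s1 + s2) *\<^sub>R a = s1 *\<^sub>R a1 + s2 *\<^sub>R a2"
  shows "(s1 + s2) * f a \<le> s1 * f a1 + s2 * f a2"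
proof (cases "s1 + s2 = 0")
  case False
  then have pos: "0 < s1 + s2"
    using assms by simp
  have "a = (1 / (s1 + s2)) *\<^sub>R ((s1 + s2) *\<^sub>R a)"
    using pos by simp
  also have "\<dots> = (s1 / (s1 + s2)) *\<^sub>R a1 + (s2 / (s1 + s2)) *\<^sub>R a2"
    by (simp add: a scaleR_add_right)
  finally have "a = (s1 / (s1 + s2)) *\<^sub>R a1 + (s2 / (s1 + s2)) *\<^sub>R a2" .
  moreover have "0 \<le> s1 / (s1 + s2)" "0 \<le> s2 / (s1 + s2)" "s1 / (s1 + s2) + s2 / (s1 + s2) = 1"
    using assms(2,3) pos by (simp_all flip: add_divide_distrib)
  ultimately have "f a \<le> (s1 / (s1 + s2)) * f a1 + (s2 / (s1 + s2)) * f a2"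
    using assms(1) unfolding convex_on_def by blast
  then have "f a \<le> (s1 * f a1 + s2 * f a2) / (s1 + s2)"
    by (simp add: add_divide_distrib)
  then show ?thesis
    using pos by (simp add: pos_le_divide_eq mult.commute)
next
  case True
  then show ?thesis
    using assms(2,3) by (simp add: add_nonneg_eq_0_iff)
qed

lemma perspective_plus_jointly_convex:
  fixes f g :: "'a::real_vector \<Rightarrow> real"
  assumes f: "convex_on UNIV f" and g: "convex_on UNIV g"
    and "0 \<le> w1" "0 \<le> w2" and uv: "0 \<le> u" "0 \<le> v" "u + v = 1"
  obtains a where "(u * w1 + v * w2) *\<^sub>R a = u *\<^sub>R (w1 *\<^sub>R a1) + v *\<^sub>R (w2 *\<^sub>R a2)"
    and "(u * w1 + v * w2) * f a + g ((u * w1 + v * w2) *\<^sub>R a)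
      \<le> u * (w1 * f a1 + g (w1 *\<^sub>R a1)) + v * (w2 * f a2 + g (w2 *\<^sub>R a2))"
proof -
  define s1 where "s1 = u * w1"
  define s2 where "s2 = v * w2"
  have s: "0 \<le> s1" "0 \<le> s2"
    using assms by (simp_all add: s1_def s2_def)
  obtain a where a: "(s1 + s2) *\<^sub>R a = s1 *\<^sub>R a1 + s2 *\<^sub>R a2"
  proof (cases "s1 + s2 = 0")
    case True
    with s have "s1 = 0" "s2 = 0"
      by simp_all
    then show thesis
      using that[of 0] by simp
  next
    case False
    then show thesis
      using that[of "(1 / (s1 + s2)) *\<^sub>R (s1 *\<^sub>R a1 + s2 *\<^sub>R a2)"] by simp
  qed
  have "(s1 + s2) * f a \<le> s1 * f a1 + s2 * f a2"
    using convex_on_perspective_le[OF f s a] .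
  moreover have "(s1 + s2) *\<^sub>R a = u *\<^sub>R (w1 *\<^sub>R a1) + v *\<^sub>R (w2 *\<^sub>R a2)"
    using a by (simp add: s1_def s2_def)
  moreover have "g (u *\<^sub>R (w1 *\<^sub>R a1) + v *\<^sub>R (w2 *\<^sub>R a2)) \<le> u * g (w1 *\<^sub>R a1) + v * g (w2 *\<^sub>R a2)"
    using g uv unfolding convex_on_def by blast
  ultimately show thesis
    using that[of a] by (simp add: s1_def s2_def algebra_simps)
qed

(* With f = quad_form P and g = quad_form Q one has w * quad_form (P + w *R Q) a = w * f a + g (w *R a):
   this is the SCI cost written so that joint convexity in (w, w *R a) is visible. *)
definition sci_cost ::
    "('a::real_vector \<Rightarrow> real) \<Rightarrow> ('a \<Rightarrow> real) \<Rightarrow> ('a \<Rightarrow> real) \<Rightarrow> ('a \<Rightarrow> real) \<Rightarrow> real \<Rightarrow> 'a \<times> 'a \<Rightarrow> real"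
  where "sci_cost f g f' g' w = (\<lambda>(a, b). w * f a + g (w *\<^sub>R a) + (1 - w) * f' b + g' ((1 - w) *\<^sub>R b))"

lemma sci_cost_jointly_convex:
  assumes f: "convex_on UNIV f" "convex_on UNIV f'" and g: "convex_on UNIV g" "convex_on UNIV g'"
    and w: "w1 \<in> {0..1}" "w2 \<in> {0..1}"
    and feasible: "w1 *\<^sub>R a1 + (1 - w1) *\<^sub>R b1 = x" "w2 *\<^sub>R a2 + (1 - w2) *\<^sub>R b2 = x"
    and uv: "0 \<le> u" "0 \<le> v" "u + v = 1"
  shows "\<exists>a b. (u * w1 + v * w2) *\<^sub>R a + (1 - (u * w1 + v * w2)) *\<^sub>R b = x \<and>
    sci_cost f g f' g' (u * w1 + v * w2) (a, b)
      \<le> u * sci_cost f g f' g' w1 (a1, b1) + v * sci_cost f g f' g' w2 (a2, b2)"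
proof -
  define w where "w = u * w1 + v * w2"
  have complement: "1 - w = u * (1 - w1) + v * (1 - w2)"
    using uv by (simp add: w_def algebra_simps)
  have nonneg: "0 \<le> w1" "0 \<le> w2" "0 \<le> 1 - w1" "0 \<le> 1 - w2"
    using w by simp_all
  obtain a where a: "w *\<^sub>R a = u *\<^sub>R (w1 *\<^sub>R a1) + v *\<^sub>R (w2 *\<^sub>R a2)"
    and cost_a: "w * f a + g (w *\<^sub>R a)
      \<le> u * (w1 * f a1 + g (w1 *\<^sub>R a1)) + v * (w2 * f a2 + g (w2 *\<^sub>R a2))"
    unfolding w_def using perspective_plus_jointly_convex[OF f(1) g(1) nonneg(1,2) uv] by blast
  obtain b where b: "(1 - w) *\<^sub>R b = u *\<^sub>R ((1 - w1) *\<^sub>R b1) + v *\<^sub>R ((1 - w2) *\<^sub>R b2)"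
    and cost_b: "(1 - w) * f' b + g' ((1 - w) *\<^sub>R b)
      \<le> u * ((1 - w1) * f' b1 + g' ((1 - w1) *\<^sub>R b1)) + v * ((1 - w2) * f' b2 + g' ((1 - w2) *\<^sub>R b2))"
    unfolding complement using perspective_plus_jointly_convex[OF f(2) g(2) nonneg(3,4) uv] by blast
  have "w *\<^sub>R a + (1 - w) *\<^sub>R b
      = u *\<^sub>R (w1 *\<^sub>R a1 + (1 - w1) *\<^sub>R b1) + v *\<^sub>R (w2 *\<^sub>R a2 + (1 - w2) *\<^sub>R b2)"
    unfolding a b by (simp add: algebra_simps)
  also have "\<dots> = x"
    using uv by (simp add: feasible flip: scaleR_add_left)
  finally have "w *\<^sub>R a + (1 - w) *\<^sub>R b = x" .
  moreover have "sci_cost f g f' g' w (a, b)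
      \<le> u * sci_cost f g f' g' w1 (a1, b1) + v * sci_cost f g f' g' w2 (a2, b2)"
    using add_mono[OF cost_a cost_b] by (simp add: sci_cost_def algebra_simps)
  ultimately show ?thesis
    unfolding w_def by blast
qed

lemma convex_on_sci_cost_minimum:
  fixes h :: "real \<Rightarrow> real"
  assumes "convex_on UNIV f" "convex_on UNIV g" "convex_on UNIV f'" "convex_on UNIV g'"
    and attained: "\<And>w. w \<in> {0..1} \<Longrightarrow>
      \<exists>a b. w *\<^sub>R a + (1 - w) *\<^sub>R b = x \<and> sci_cost f g f' g' w (a, b) \<le> h w"
    and lower: "\<And>w a b. w \<in> {0..1} \<Longrightarrow> w *\<^sub>R a + (1 - w) *\<^sub>R b = x \<Longrightarrow>
      h w \<le> sci_cost f g f' g' w (a, b)"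
  shows "convex_on {0..1} h"
proof (rule convex_on_partial_minimum[where F = "\<lambda>w. {(a, b). w *\<^sub>R a + (1 - w) *\<^sub>R b = x}"])
  show "\<exists>y \<in> {(a, b). w *\<^sub>R a + (1 - w) *\<^sub>R b = x}. sci_cost f g f' g' w y \<le> h w"
    if "w \<in> {0..1}" for w
    using attained[OF that] by auto
  show "h w \<le> sci_cost f g f' g' w y"
    if "w \<in> {0..1}" "y \<in> {(a, b). w *\<^sub>R a + (1 - w) *\<^sub>R b = x}" for w y
    using lower that by auto
  show "\<exists>y \<in> {(a, b). (u *\<^sub>R w1 + v *\<^sub>R w2) *\<^sub>R a + (1 - (u *\<^sub>R w1 + v *\<^sub>R w2)) *\<^sub>R b = x}.
      sci_cost f g f' g' (u *\<^sub>R w1 + v *\<^sub>R w2) y \<le> u * sci_cost f g f' g' w1 y1 + v * sci_cost f g f' g' w2 y2"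
    if "w1 \<in> {0..1}" "w2 \<in> {0..1}" "y1 \<in> {(a, b). w1 *\<^sub>R a + (1 - w1) *\<^sub>R b = x}"
      "y2 \<in> {(a, b). w2 *\<^sub>R a + (1 - w2) *\<^sub>R b = x}" "0 \<le> u" "0 \<le> v" "u + v = 1"
    for w1 w2 y1 y2 and u v :: real
    using sci_cost_jointly_convex[OF assms(1,3,2,4) that(1,2) _ _ that(5-7)] that(3,4) by fastforce
qed (rule convex_real_interval)

lemma scaled_quad_form_add_scaleR:
  fixes P Q :: "real^'n^'n"
  shows "s * quad_form (P + s *\<^sub>R Q) a = s * quad_form P a + quad_form Q (s *\<^sub>R a)"
  by (simp add: quad_form_matrix_add quad_form_matrix_scaleR quad_form_scaleR power2_eq_square algebra_simps)

lemma quad_form_B_SCI_minimum: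
  fixes PA PB QA QB :: "real^'n^'n"
  assumes "spd PA" "spd PB" "psd QA" "psd QB" and w: "w \<in> {0..1}"
  defines "cost \<equiv> sci_cost (quad_form PA) (quad_form QA) (quad_form PB) (quad_form QB) w"
  shows "\<exists>a b. w *\<^sub>R a + (1 - w) *\<^sub>R b = x \<and> cost (a, b) = quad_form (B_SCI PA PB QA QB w) x"
    and "w *\<^sub>R a + (1 - w) *\<^sub>R b = x \<Longrightarrow> quad_form (B_SCI PA PB QA QB w) x \<le> cost (a, b)"
proof -
  define MA where "MA = PA + w *\<^sub>R QA"
  define MB where "MB = PB + (1 - w) *\<^sub>R QB"
  have spd: "spd MA" "spd MB"
    using assms w by (simp_all add: MA_def MB_def spd_add_psd psd_scaleR spd_imp_psd)
  have "spd (w *\<^sub>R matrix_inv MA + (1 - w) *\<^sub>R matrix_inv MB)"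
    using spd w by (simp add: spd_convex_combination spd_matrix_inv)
  note minimum = quad_form_inv_sum_minimum[OF spd_imp_psd[OF spd(1)] spd_imp_psd[OF spd(2)]
      spd_invertible[OF spd(1)] spd_invertible[OF spd(2)] spd_invertible[OF this]]
  have cost: "cost (a, b) = w * quad_form MA a + (1 - w) * quad_form MB b" for a b
    by (simp add: cost_def sci_cost_def MA_def MB_def scaled_quad_form_add_scaleR)
  have B: "B_SCI PA PB QA QB w = matrix_inv (w *\<^sub>R matrix_inv MA + (1 - w) *\<^sub>R matrix_inv MB)"
    by (simp add: B_SCI_def MA_def MB_def)
  show "\<exists>a b. w *\<^sub>R a + (1 - w) *\<^sub>R b = x \<and> cost (a, b) = quad_form (B_SCI PA PB QA QB w) x"
    using minimum(1) w by (simp add: cost B)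
  show "quad_form (B_SCI PA PB QA QB w) x \<le> cost (a, b)" if "w *\<^sub>R a + (1 - w) *\<^sub>R b = x"
    using minimum(2)[OF _ _ that] w by (simp add: cost B)
qed

lemma convex_on_quad_form_B_SCI:
  fixes PA PB QA QB :: "real^'n^'n"
  assumes "spd PA" "spd PB" "psd QA" "psd QB"
  shows "convex_on {0..1} (\<lambda>w. quad_form (B_SCI PA PB QA QB w) x)"
proof (rule convex_on_sci_cost_minimum)
  show "convex_on UNIV (quad_form PA)" "convex_on UNIV (quad_form QA)"
    "convex_on UNIV (quad_form PB)" "convex_on UNIV (quad_form QB)"
    using assms by (simp_all add: psd_quad_form_convex spd_imp_psd)
next
  show "\<exists>a b. w *\<^sub>R a + (1 - w) *\<^sub>R b = x \<and>
      sci_cost (quad_form PA) (quad_form QA) (quad_form PB) (quad_form QB) w (a, b)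
        \<le> quad_form (B_SCI PA PB QA QB w) x" if "w \<in> {0..1}" for w
    using quad_form_B_SCI_minimum(1)[OF assms that] by (metis order_refl)
next
  show "quad_form (B_SCI PA PB QA QB w) x
      \<le> sci_cost (quad_form PA) (quad_form QA) (quad_form PB) (quad_form QB) w (a, b)"
    if "w \<in> {0..1}" "w *\<^sub>R a + (1 - w) *\<^sub>R b = x" for w a b
    using quad_form_B_SCI_minimum(2)[OF assms that] .
qed

lemma trace_eq_sum_quad_form_axis:
  fixes M :: "real^'n^'n"
  shows "trace M = (\<Sum>i\<in>UNIV. quad_form M (axis i 1))"
  unfolding trace_def quad_form_def
  by (simp add: matrix_vector_mult_basis column_def inner_axis')

lemma convex_on_sum_functions:
  assumes "finite I" "convex S" "\<And>i. i \<in> I \<Longrightarrow> convex_on S (f i)"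
  shows "convex_on S (\<lambda>x. \<Sum>i\<in>I. f i x)"
  using assms by (induction I rule: finite_induct) (auto simp: convex_on_const)

theorem lemma6:
  fixes PA PB QA QB :: "real^'n^'n"
  assumes "spd PA" and "spd PB" and "spd QA" and "spd QB"
  shows "convex_on {0..1} (\<lambda>\<omega>. trace (B_SCI PA PB QA QB \<omega>))"
  unfolding trace_eq_sum_quad_form_axis
  by (intro convex_on_sum_functions convex_on_quad_form_B_SCI spd_imp_psd assms)
    (simp_all add: convex_real_interval)

end
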